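(* Let $C \subset \mathbb{R}^n$ be convex and closed with nonempty interior, and let $h\colon C\to\mathbb{R}$ be Legendre on $C$, continuous on $C$, and satisfy condition (B): for every sequence $(x_k)_{k\in\mathbb{N}} \subset \mathrm{int}\, C$ and every $y \in C$, if $x_k \to y$ then $D_h(y,x_k) \to 0$. Let $a \in \mathrm{bd}\, C$ be an extreme point of $C$ and let $y \in C$ with $y \neq a$. Then for any $\epsilon > 0$ and $K > 0$ there exists $c \in \mathrm{int}\, C$ such that $\|c - a\| \le \epsilon$ and $D_h(y,c) \ge K$.
   Context: A convex function $h \colon C \to \mathbb{R}$ on a convex set $C\subset\mathbb{R}^n$ with nonempty interior is called Legendre if (1) $h$ is continuously differentiable on $\mathrm{int}\, C$ and $\|\nabla h(x)\| \to +\infty$ whenever $x \in \mathrm{int}\, C$ approaches a point of the boundary of $C$; and (2) $h$ is strictly convex on $\mathrm{int}\, C$. The Bregman divergence is $D_h(y,x) = h(y) - h(x) - \langle \nabla h(x), y - x\rangle$ for $y \in C$, $x \in \mathrm{int}\, C$. $\mathrm{bd}\, C$ denotes the boundary of $C$. *)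

theory Defs
  imports "HOL-Analysis.Analysis"
begin

definition grad :: "('a::euclidean_space \<Rightarrow> real) \<Rightarrow> 'a \<Rightarrow> 'a" where
  "grad h x = (SOME g. (h has_derivative (\<lambda>v. g \<bullet> v)) (at x))"

definition strictly_convex_on :: "'a::real_vector set \<Rightarrow> ('a \<Rightarrow> real) \<Rightarrow> bool" where
  "strictly_convex_on S f \<longleftrightarrow>
     (\<forall>x\<in>S. \<forall>y\<in>S. \<forall>t::real. x \<noteq> y \<and> 0 < t \<and> t < 1 \<longrightarrow>
        f ((1 - t) *\<^sub>R x + t *\<^sub>R y) < (1 - t) * f x + t * f y)"

definition legendre :: "'a::euclidean_space set \<Rightarrow> ('a \<Rightarrow> real) \<Rightarrow> bool" where
  "legendre C h \<longleftrightarrow>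
     convex C \<and> interior C \<noteq> {} \<and> convex_on C h \<and>
     (\<forall>x\<in>interior C. h differentiable (at x)) \<and>
     continuous_on (interior C) (grad h) \<and>
     (\<forall>b\<in>frontier C. filterlim (\<lambda>x. norm (grad h x)) at_top (at b within interior C)) \<and>
     strictly_convex_on (interior C) h"

definition bregman :: "('a::euclidean_space \<Rightarrow> real) \<Rightarrow> 'a \<Rightarrow> 'a \<Rightarrow> real" where
  "bregman h y x = h y - h x - grad h x \<bullet> (y - x)"

end

theory Submission
  imports Defs
begin

(* Since a is an extreme point, the ray from y through a leaves C right after a. By continuity
   the same holds for the ray from y through any interior point c0 close to a, and this ray crosses
   the boundary at some b close to a. The gradient of h blows up towards b, and at a point c
   between c0 and b the gradient inequality, tested on a ball around c0 on which h is bounded,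
   gives <grad h c, c - c0> >= r |grad h c| - O(1). As c0 lies between y and c, the same lower
   bound holds for <grad h c, c - y>, the only unbounded term of D_h(y, c). *)

lemma has_derivative_grad:
  fixes h :: "'a::euclidean_space \<Rightarrow> real"
  assumes "h differentiable (at x)"
  shows "(h has_derivative (\<lambda>v. grad h x \<bullet> v)) (at x)"
proof -
  obtain D where D: "(h has_derivative D) (at x)"
    using assms by (auto simp: differentiable_def)
  have "D = (\<lambda>v. adjoint D 1 \<bullet> v)"
    using adjoint_works[OF has_derivative_linear[OF D], of _ 1] by (auto simp: inner_commute)
  with D have "\<exists>g. (h has_derivative (\<lambda>v. g \<bullet> v)) (at x)"
    by metis
  then show ?thesis
    unfolding grad_def by (rule someI_ex)
qed

lemma convex_on_above_tangent:
  fixes h :: "'a::real_normed_vector \<Rightarrow> real"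
  assumes convex: "convex_on C h" and "c \<in> C" "z \<in> C"
    and deriv: "(h has_derivative D) (at c)"
  shows "h c + D (z - c) \<le> h z"
proof -
  define \<phi> where "\<phi> t = h (c + t *\<^sub>R (z - c))" for t :: real
  have "((\<lambda>t. c + t *\<^sub>R (z - c)) has_derivative (\<lambda>t. t *\<^sub>R (z - c))) (at 0)"
    by (auto intro!: derivative_eq_intros)
  from has_derivative_compose[OF this] deriv
  have "(\<phi> has_derivative (\<lambda>t. D (t *\<^sub>R (z - c)))) (at 0)"
    unfolding \<phi>_def by simp
  moreover have "(\<lambda>t. D (t *\<^sub>R (z - c))) = (*) (D (z - c))"
    using linear_scale[OF has_derivative_linear[OF deriv]] by (auto simp: mult.commute)
  ultimately have "(\<phi> has_real_derivative D (z - c)) (at 0 within {0<..})"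
    by (simp add: has_field_derivative_def has_derivative_at_withinI)
  then have "((\<lambda>t. (\<phi> t - \<phi> 0) / t) \<longlongrightarrow> D (z - c)) (at_right 0)"
    by (simp add: has_field_derivative_iff)
  moreover have "\<forall>\<^sub>F t in at_right 0. (\<phi> t - \<phi> 0) / t \<le> h z - h c"
    using eventually_at_right_real[OF zero_less_one]
  proof eventually_elim
    case (elim t)
    have "c + t *\<^sub>R (z - c) = (1 - t) *\<^sub>R c + t *\<^sub>R z"
      by (simp add: algebra_simps)
    then have "\<phi> t \<le> (1 - t) * h c + t * h z"
      unfolding \<phi>_def using convex_onD[OF convex, of t c z] assms(2,3) elim by simp
    then show ?case
      using elim by (simp add: \<phi>_def divide_simps algebra_simps)
  qed
  ultimately have "D (z - c) \<le> h z - h c"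
    by (rule tendsto_upperbound) simp
  then show ?thesis
    by simp
qed

lemma gradient_inner_ge_of_bounded_ball:
  fixes h :: "'a::real_inner \<Rightarrow> real"
  assumes "convex_on C h" "c \<in> C" "(h has_derivative (\<lambda>v. g \<bullet> v)) (at c)"
    and "r \<ge> 0" "cball c0 r \<subseteq> C" "\<forall>z\<in>cball c0 r. h z \<le> M"
  shows "r * norm g + h c - M \<le> g \<bullet> (c - c0)"
proof -
  \<comment> \<open>For \<open>g = 0\<close> the point \<open>z\<close> is \<open>c0\<close>, since \<open>r / 0 = 0\<close>.\<close>
  define z where "z = c0 + (r / norm g) *\<^sub>R g"
  have "z \<in> cball c0 r"
    using \<open>r \<ge> 0\<close> by (cases "g = 0") (auto simp: z_def dist_norm)
  then have "h c + g \<bullet> (z - c) \<le> M"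
    using convex_on_above_tangent[OF assms(1,2) _ assms(3)] assms(5,6) by fastforce
  moreover have "g \<bullet> (z - c) = r * norm g - g \<bullet> (c - c0)"
    by (cases "g = 0")
      (simp_all add: z_def inner_diff_right inner_add_right dot_square_norm power2_eq_square)
  ultimately show ?thesis
    by simp
qed

lemma bregman_ge_of_bounded_ball:
  fixes h :: "'a::euclidean_space \<Rightarrow> real"
  assumes "convex_on C h" "c \<in> C" "h differentiable (at c)"
    and "r \<ge> 0" "cball c0 r \<subseteq> C" "\<forall>z\<in>cball c0 r. h z \<le> M"
    and "c0 \<in> closed_segment y c" "M < h c + r * norm (grad h c)"
  shows "h y - M + r * norm (grad h c) \<le> bregman h y c"
proof -
  define g where "g = grad h c"
  have lower: "r * norm g + h c - M \<le> g \<bullet> (c - c0)"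
    using gradient_inner_ge_of_bounded_ball[OF assms(1,2) has_derivative_grad[OF assms(3)] assms(4-6)]
    by (simp add: g_def)
  obtain u where u: "0 \<le> u" "u \<le> 1" "c0 = (1 - u) *\<^sub>R y + u *\<^sub>R c"
    using \<open>c0 \<in> closed_segment y c\<close> by (auto simp: closed_segment_def)
  then have "c - c0 = (1 - u) *\<^sub>R (c - y)"
    by (simp add: algebra_simps)
  then have "g \<bullet> (c - c0) = (1 - u) * (g \<bullet> (c - y))"
    by simp
  moreover have "g \<bullet> (c - c0) > 0"
    using lower assms(8) by (simp add: g_def)
  ultimately have "g \<bullet> (c - c0) \<le> g \<bullet> (c - y)"
    using u by (simp add: zero_less_mult_iff mult_left_le_one_le)
  then show ?thesis
    using lower by (simp add: bregman_def g_def inner_diff_right)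
qed

lemma closed_segment_extension:
  fixes a y :: "'a::real_vector"
  assumes "s \<ge> 0"
  shows "a \<in> closed_segment y (a + s *\<^sub>R (a - y))"
proof -
  define u where "u = 1 / (1 + s)"
  have "u * (1 + s) = 1"
    using assms by (simp add: u_def)
  then have "a = (1 - u) *\<^sub>R y + u *\<^sub>R (a + s *\<^sub>R (a - y))"
    by (simp add: algebra_simps flip: scaleR_add_left)
  moreover have "0 \<le> u" "u \<le> 1"
    using assms by (auto simp: u_def)
  ultimately show ?thesis
    unfolding closed_segment_def by blast
qed

lemma closed_segment_truncate:
  fixes a b c y :: "'a::euclidean_space"
  assumes "a \<in> closed_segment y b" "c \<in> closed_segment a b"
  shows "a \<in> closed_segment y c"
proof -
  have "c \<in> closed_segment y b"
    using assms closed_segment_subset[of a "closed_segment y b" b] by auto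
  then show ?thesis
    using between_swap[of y b a c] assms by (simp add: between_mem_segment)
qed

lemma extreme_point_extension_notin:
  assumes "a extreme_point_of C" "y \<in> C" "y \<noteq> a" "s > 0"
  shows "a + s *\<^sub>R (a - y) \<notin> C"
proof
  assume "a + s *\<^sub>R (a - y) \<in> C"
  moreover have "a \<in> open_segment y (a + s *\<^sub>R (a - y))"
    using closed_segment_extension[of s a y] assms(3,4) by (simp add: open_segment_def)
  ultimately show False
    using assms(1,2) by (auto simp: extreme_point_of_def)
qed

lemma exiting_segment_near_extreme_point:
  fixes C :: "'a::euclidean_space set"
  assumes "convex C" "closed C" "interior C \<noteq> {}"
    and "a extreme_point_of C" "y \<in> C" "y \<noteq> a" "\<epsilon> > 0"
  obtains c0 b where "c0 \<in> interior C" "b \<in> frontier C" "c0 \<in> closed_segment y b"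
    "closed_segment c0 b \<subseteq> ball a \<epsilon>"
proof -
  define s where "s = \<epsilon> / (2 * norm (a - y))"
  define f where "f x = x + s *\<^sub>R (x - y)" for x
  have "s > 0"
    using assms(6,7) by (simp add: s_def)
  have "dist a (f a) < \<epsilon>"
    using assms(6,7) by (simp add: f_def s_def dist_norm)
  moreover have "f a \<notin> C"
    unfolding f_def using extreme_point_extension_notin[OF assms(4-6) \<open>s > 0\<close>] .
  ultimately have "f a \<in> ball a \<epsilon> - C"
    by simp
  moreover have "continuous (at a) f"
    unfolding f_def by (intro continuous_intros)
  ultimately obtain V where V: "open V" "a \<in> V" "\<And>x. x \<in> V \<Longrightarrow> f x \<in> ball a \<epsilon> - C"
    using \<open>closed C\<close> by (metis continuous_at_open open_Diff open_ball)
  have "a \<in> closure (interior C)"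
    using assms(1,3,4) convex_closure_interior closure_subset by (auto simp: extreme_point_of_def)
  with V(2) assms(7) have "a \<in> V \<inter> ball a \<epsilon> \<inter> closure (interior C)"
    by simp
  then have "V \<inter> ball a \<epsilon> \<inter> interior C \<noteq> {}"
    using open_Int_closure_eq_empty[OF open_Int[OF V(1) open_ball]] by blast
  then obtain c0 where c0: "c0 \<in> V" "c0 \<in> ball a \<epsilon>" "c0 \<in> interior C"
    by blast
  have "closed_segment c0 (f c0) \<inter> frontier C \<noteq> {}"
    using c0 V(3) interior_subset by (intro connected_Int_frontier) auto
  then obtain b where b: "b \<in> closed_segment c0 (f c0)" "b \<in> frontier C"
    by blast
  have "c0 \<in> closed_segment y (f c0)"
    unfolding f_def using \<open>s > 0\<close> by (simp add: closed_segment_extension)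
  then have "c0 \<in> closed_segment y b"
    using b(1) by (rule closed_segment_truncate)
  moreover have "closed_segment c0 b \<subseteq> ball a \<epsilon>"
    using b(1) c0 V(3) by (meson closed_segment_subset convex_ball ends_in_segment(1) DiffD1 subsetD)
  ultimately show ?thesis
    using that c0(3) b(2) by blast
qed

lemma legendre_grad_unbounded_on_segment:
  assumes "legendre C h" "c0 \<in> interior C" "b \<in> frontier C"
  obtains c where "c \<in> open_segment c0 b" "N \<le> norm (grad h c)"
proof -
  have "open_segment c0 b \<subseteq> interior C"
    using assms by (intro in_interior_closure_convex_segment) (auto simp: legendre_def frontier_def)
  moreover have "\<forall>\<^sub>F x in at b within interior C. N \<le> norm (grad h x)"
    using assms(1,3) by (auto simp: legendre_def filterlim_at_top)
  ultimately obtain d where d: "d > 0"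
    "\<And>x. x \<in> open_segment c0 b \<Longrightarrow> x \<noteq> b \<Longrightarrow> dist x b < d \<Longrightarrow> N \<le> norm (grad h x)"
    by (auto simp: eventually_at)
  have "c0 \<noteq> b"
    using assms(2,3) by (auto simp: frontier_def)
  moreover have "open_segment c0 b - {b} = open_segment c0 b"
    by (simp add: open_segment_def)
  ultimately have "b islimpt open_segment c0 b"
    by (simp add: islimpt_in_closure)
  then obtain c where "c \<in> open_segment c0 b" "c \<noteq> b" "dist c b < d"
    using d(1) by (auto simp: islimpt_approachable)
  then show ?thesis
    using that d(2) by blast
qed

lemma legendre_bregman_unbounded_on_segment:
  assumes "legendre C h" "c0 \<in> interior C" "b \<in> frontier C" "c0 \<in> closed_segment y b"
    and "r > 0" "cball c0 r \<subseteq> C" "\<forall>x\<in>cball c0 r \<union> open_segment c0 b. \<bar>h x\<bar> \<le> M"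
    and "K > 0"
  obtains c where "c \<in> open_segment c0 b" "K \<le> bregman h y c"
proof -
  obtain c where c: "c \<in> open_segment c0 b"
    and large: "(K + 2 * M + \<bar>h y\<bar>) / r \<le> norm (grad h c)"
    using legendre_grad_unbounded_on_segment[OF assms(1-3)] .
  have "c \<in> interior C"
    using c assms(1-3) in_interior_closure_convex_segment by (fastforce simp: legendre_def frontier_def)
  have "\<bar>h c\<bar> \<le> M"
    using assms(7) c by blast
  have "K + 2 * M + \<bar>h y\<bar> \<le> r * norm (grad h c)"
    using large \<open>r > 0\<close> by (simp add: field_simps)
  moreover have "h y - M + r * norm (grad h c) \<le> bregman h y c"
  proof (rule bregman_ge_of_bounded_ball)
    show "convex_on C h" "h differentiable (at c)"
      using \<open>legendre C h\<close> \<open>c \<in> interior C\<close> by (auto simp: legendre_def)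
    show "c0 \<in> closed_segment y c"
      using assms(4) c segment_open_subset_closed by (blast intro: closed_segment_truncate)
    show "M < h c + r * norm (grad h c)"
      using calculation \<open>\<bar>h c\<bar> \<le> M\<close> \<open>K > 0\<close> by linarith
    show "\<forall>z\<in>cball c0 r. h z \<le> M"
      using assms(7) by force
  qed (use \<open>c \<in> interior C\<close> interior_subset assms(5,6) in auto)
  ultimately have "K \<le> bregman h y c"
    using \<open>\<bar>h c\<bar> \<le> M\<close> by linarith
  with c show ?thesis
    by (rule that)
qed

theorem lemma2:
  fixes C :: "'a::euclidean_space set" and h :: "'a \<Rightarrow> real"
    and a y :: 'a and \<epsilon> K :: real
  assumes "convex C" and "closed C" and "interior C \<noteq> {}"
    and "legendre C h"
    and "continuous_on C h"
    and condB: "\<And>xs z. (\<forall>k. xs k \<in> interior C) \<Longrightarrow> z \<in> C \<Longrightarrow> xs \<longlonglongrightarrow> z \<Longrightarrow>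
                  (\<lambda>k. bregman h z (xs k)) \<longlonglongrightarrow> 0"
    and "a \<in> frontier C" and "a extreme_point_of C"
    and "y \<in> C" and "y \<noteq> a"
    and "\<epsilon> > 0" and "K > 0"
  shows "\<exists>c\<in>interior C. norm (c - a) \<le> \<epsilon> \<and> bregman h y c \<ge> K"
proof -
  have "compact (h ` (C \<inter> cball a \<epsilon>))"
    using \<open>continuous_on C h\<close> \<open>closed C\<close>
    by (intro compact_continuous_image) (auto intro: continuous_on_subset compact_Int_closed)
  then obtain M where M: "\<forall>x\<in>C \<inter> cball a \<epsilon>. \<bar>h x\<bar> \<le> M"
    by (metis bounded_real compact_imp_bounded image_eqI)
  obtain c0 b where c0: "c0 \<in> interior C" and b: "b \<in> frontier C"
    and "c0 \<in> closed_segment y b" and near_a: "closed_segment c0 b \<subseteq> ball a \<epsilon>"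
    using exiting_segment_near_extreme_point assms(1-3,8-11) .
  have segment_inside: "open_segment c0 b \<subseteq> interior C \<inter> ball a \<epsilon>"
    using in_interior_closure_convex_segment[OF \<open>convex C\<close> c0] b near_a segment_open_subset_closed[of c0 b]
    by (auto simp: frontier_def)
  have "c0 \<in> interior C \<inter> ball a \<epsilon>"
    using c0 near_a by auto
  then obtain r where "r > 0" and r: "cball c0 r \<subseteq> interior C \<inter> ball a \<epsilon>"
    by (meson open_contains_cball open_Int open_interior open_ball)
  have "cball c0 r \<subseteq> C"
    using r interior_subset by blast
  moreover have "\<forall>x\<in>cball c0 r \<union> open_segment c0 b. \<bar>h x\<bar> \<le> M"
    using M r segment_inside interior_subset by fastforce
  ultimately obtain c where "c \<in> open_segment c0 b" "K \<le> bregman h y c"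
    using legendre_bregman_unbounded_on_segment \<open>legendre C h\<close> c0 b \<open>c0 \<in> closed_segment y b\<close>
      \<open>r > 0\<close> \<open>K > 0\<close> by blast
  then show ?thesis
    using segment_inside by (force simp: dist_norm norm_minus_commute)
qed

end
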